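(* Let $n\ge 1$ and let $x:\mathbb{N}\to\mathbb{R}$ satisfy $x(t+n)=a_1x(t+n-1)+\dots+a_nx(t)$ for all $t\in\mathbb{N}$, with $a_1,\dots,a_n\in\mathbb{R}$. Assume that $x$ satisfies no linear difference equation of order strictly less than $n$, i.e. there is no integer $m<n$ and no $c_1,\dots,c_m\in\mathbb{R}$ with $x(t+m)=c_1x(t+m-1)+\dots+c_mx(t)$ for all $t\in\mathbb{N}$. Let $X\in\mathbb{R}(z)$ be the rational function whose expansion at infinity is $\sum_{t\ge0}x(t)z^{-(t+1)}$, let $Q(z)=z^n-a_1z^{n-1}-\dots-a_n$, and let $P=QX$, which is a polynomial $P(z)=b_0z^{n-1}+b_1z^{n-2}+\dots+b_{n-1}$ with $b_0,\dots,b_{n-1}\in\mathbb{R}$. Then the parameters $a_1,\dots,a_n,b_0,\dots,b_{n-1}$ are linearly identifiable: the $(2n+1)\times(2n+1)$ Wronskian matrix $\mathcal{M}$ whose $\chi$-th row ($0\le\chi\le 2n$) is $$\Big(\tfrac{d^\chi}{dz^\chi}(z^nX),\ \tfrac{d^\chi}{dz^\chi}(z^{n-1}X),\ \dots,\ \tfrac{d^\chi}{dz^\chi}X,\ \tfrac{d^\chi}{dz^\chi}z^{n-1},\ \dots,\ \tfrac{d^\chi}{dz^\chi}z,\ \tfrac{d^\chi}{dz^\chi}1\Big)$$ has rank $2n$, and $(\alpha_1,\dots,\alpha_n,\beta_0,\dots,\beta_{n-1})=(a_1,\dots,a_n,b_0,\dots,b_{n-1})$ is the unique solution in $\mathbb{R}(z)^{2n}$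 of the linear system $$\frac{d^\chi}{dz^\chi}(z^nX)=\sum_{i=1}^n\alpha_i\frac{d^\chi}{dz^\chi}(z^{n-i}X)+\sum_{j=0}^{n-1}\beta_j\frac{d^\chi}{dz^\chi}z^{n-1-j},\qquad \chi=0,1,\dots,2n.$$
   Context: $\mathbb{R}(z)$ is the field of real rational functions, viewed as a differential field with derivation $d/dz$ (its field of constants is $\mathbb{R}$). The rational function $X$ exists because $x$ satisfies a linear recurrence. *)

theory Defs
  imports Complex_Main "HOL-Computational_Algebra.Polynomial" "HOL-Computational_Algebra.Fraction_Field"
    "Jordan_Normal_Form.DL_Rank"
begin

text \<open>The field of real rational functions R(z) is modelled as real poly fract.
  A polynomial is embedded as a constant fraction.\<close>

definition rf_of_poly :: "real poly \<Rightarrow> real poly fract" where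
  "rf_of_poly p = Fract p 1"

definition rf_const :: "real \<Rightarrow> real poly fract" where
  "rf_const c = rf_of_poly [:c:]"

definition rf_deriv :: "real poly fract \<Rightarrow> real poly fract" where
  "rf_deriv r = (let (p, q) = (SOME (p, q). q \<noteq> 0 \<and> r = Fract p q)
                 in Fract (pderiv p * q - p * pderiv q) (q * q))"

definition rf_deriv_n :: "nat \<Rightarrow> real poly fract \<Rightarrow> real poly fract" where
  "rf_deriv_n k = rf_deriv ^^ k"

definition rf_z_pow :: "nat \<Rightarrow> real poly fract" where
  "rf_z_pow k = rf_of_poly (monom 1 k)"

end

theory Submission
  imports Defs
    "HOL-Computational_Algebra.Polynomial_Factorial"
    "HOL-Computational_Algebra.Field_as_Ring"
    "HOL-Computational_Algebra.Formal_Laurent_Series"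
begin

text \<open>Since Q X = P with Q and P polynomials, z^n X is a combination of z^(n-1) X, ..., X,
  z^(n-1), ..., 1 with real, hence constant, coefficients; differentiating gives the linear
  system, and the first column of the Wronskian matrix is a combination of the other 2n.
  Conversely these 2n functions are linearly independent over the reals: a relation C X + E = 0
  with deg C, deg E < n, expanded at infinity, says that C annihilates x, which minimality of
  the recurrence rules out unless C = 0, and then E = 0. In a differential field, functions that
  are linearly independent over the constants have a Wronskian of full rank; this gives both
  the rank 2n and the uniqueness of the solution.\<close>

section \<open>Wronskians in differential fields\<close>

locale field_derivation =
  fixes D :: "'a::field \<Rightarrow> 'a"
  assumes D_add: "D (x + y) = D x + D y"
    and D_mult: "D (x * y) = D x * y + x * D y"
begin

lemma D_zero [simp]: "D 0 = 0"
  using D_add[of 0 0] by (metis add_cancel_left_right)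

lemma D_one [simp]: "D 1 = 0"
  using D_mult[of 1 1] by (metis add_cancel_left_right mult_1_left mult_1_right)

lemma D_sum: "D (\<Sum>i\<in>A. f i) = (\<Sum>i\<in>A. D (f i))"
  by (induction A rule: infinite_finite_induct) (simp_all add: D_add)

lemma D_iter_sum: "(D ^^ k) (\<Sum>i\<in>A. f i) = (\<Sum>i\<in>A. (D ^^ k) (f i))"
  by (induction k) (simp_all add: D_sum)

lemma D_iter_mult_const: "D c = 0 \<Longrightarrow> (D ^^ k) (c * u) = c * (D ^^ k) u"
  by (induction k) (simp_all add: D_mult)

definition indep_over_constants :: "(nat \<Rightarrow> 'a) \<Rightarrow> nat set \<Rightarrow> bool" where
  "indep_over_constants f I \<longleftrightarrow>
     (\<forall>c. (\<forall>i\<in>I. D (c i) = 0) \<longrightarrow> (\<Sum>i\<in>I. c i * f i) = 0 \<longrightarrow> (\<forall>i\<in>I. c i = 0))"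

lemma vanishing_combinations_D:
  assumes "\<forall>\<chi> < N. (\<Sum>i\<in>I. g i * (D ^^ \<chi>) (f i)) = 0"
  shows "\<forall>\<chi> < N - 1. (\<Sum>i\<in>I. D (g i) * (D ^^ \<chi>) (f i)) = 0"
proof (intro allI impI)
  fix \<chi> assume "\<chi> < N - 1"
  then have "D (\<Sum>i\<in>I. g i * (D ^^ \<chi>) (f i)) = 0" using assms by simp
  moreover have "Suc \<chi> < N" using \<open>\<chi> < N - 1\<close> by simp
  then have "(\<Sum>i\<in>I. g i * (D ^^ Suc \<chi>) (f i)) = 0" using assms by blast
  ultimately show "(\<Sum>i\<in>I. D (g i) * (D ^^ \<chi>) (f i)) = 0"
    by (simp add: D_sum D_mult sum.distrib)
qed

text \<open>Normalise one coefficient to 1 and differentiate the relations: the derived coefficients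
  D \<gamma> vanish at that index, so induction on the number of functions applies.\<close>
lemma wronskian_vanishing_imp_dependent:
  assumes "finite I" and "\<forall>\<chi> < card I. (\<Sum>i\<in>I. \<gamma> i * (D ^^ \<chi>) (f i)) = 0" and "\<exists>i\<in>I. \<gamma> i \<noteq> 0"
  shows "\<exists>c. (\<forall>i\<in>I. D (c i) = 0) \<and> (\<exists>i\<in>I. c i \<noteq> 0) \<and> (\<Sum>i\<in>I. c i * f i) = 0"
  using assms
proof (induction "card I" arbitrary: I \<gamma> rule: less_induct)
  case less
  obtain j where j: "j \<in> I" "\<gamma> j \<noteq> 0" using less.prems by blast
  define g where "g i = \<gamma> i / \<gamma> j" for i
  have rel: "\<forall>\<chi> < card I. (\<Sum>i\<in>I. g i * (D ^^ \<chi>) (f i)) = 0"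
    using less.prems(2) by (simp add: g_def sum_divide_distrib[symmetric])
  then have derived: "\<forall>\<chi> < card I - 1. (\<Sum>i\<in>I. D (g i) * (D ^^ \<chi>) (f i)) = 0"
    by (rule vanishing_combinations_D)
  have Dg_j: "D (g j) = 0" using j by (simp add: g_def)
  show ?case
  proof (cases "\<exists>i\<in>I - {j}. D (g i) \<noteq> 0")
    case True
    have card: "card (I - {j}) = card I - 1" using j less.prems(1) by simp
    have derived': "\<forall>\<chi> < card (I - {j}). (\<Sum>i\<in>I - {j}. D (g i) * (D ^^ \<chi>) (f i)) = 0"
    proof (intro allI impI)
      fix \<chi> assume "\<chi> < card (I - {j})"
      then have "(\<Sum>i\<in>I. D (g i) * (D ^^ \<chi>) (f i)) = 0" using derived card by simp
      then show "(\<Sum>i\<in>I - {j}. D (g i) * (D ^^ \<chi>) (f i)) = 0"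
        using sum.remove[OF less.prems(1) j(1), of "\<lambda>i. D (g i) * (D ^^ \<chi>) (f i)"] Dg_j by simp
    qed
    have "card (I - {j}) < card I"
      using less.prems(1) j(1) by (rule card_Diff1_less)
    from less.hyps[OF this finite_Diff[OF less.prems(1)] derived' True]
    obtain c where c: "\<forall>i\<in>I - {j}. D (c i) = 0" "\<exists>i\<in>I - {j}. c i \<noteq> 0"
        "(\<Sum>i\<in>I - {j}. c i * f i) = 0"
      by blast
    show ?thesis
    proof (intro exI[of _ "c(j := 0)"] conjI)
      show "\<forall>i\<in>I. D ((c(j := 0)) i) = 0" using c(1) by auto
      show "\<exists>i\<in>I. (c(j := 0)) i \<noteq> 0" using c(2) by auto
      have "(\<Sum>i\<in>I. (c(j := 0)) i * f i) = (\<Sum>i\<in>I - {j}. c i * f i)"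
        by (auto simp: sum.remove[OF less.prems(1) j(1)] intro!: sum.cong)
      then show "(\<Sum>i\<in>I. (c(j := 0)) i * f i) = 0" using c(3) by simp
    qed
  next
    case False
    then have "\<forall>i\<in>I. D (g i) = 0" using Dg_j by blast
    moreover have "g j \<noteq> 0" using j by (simp add: g_def)
    moreover have "(\<Sum>i\<in>I. g i * f i) = 0"
      using rel[rule_format, of 0] less.prems(1) j(1) by (auto simp: card_gt_0_iff)
    ultimately show ?thesis using j(1) by blast
  qed
qed

lemma wronskian_vanishing_imp_zero:
  assumes "finite I" and "indep_over_constants f I"
    and "\<forall>\<chi> < card I. (\<Sum>i\<in>I. \<gamma> i * (D ^^ \<chi>) (f i)) = 0"
  shows "\<forall>i\<in>I. \<gamma> i = 0"
  using wronskian_vanishing_imp_dependent[OF assms(1,3)] assms(2)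
  unfolding indep_over_constants_def by blast

lemma D_iter_relation:
  assumes "f 0 = (\<Sum>k\<in>K. c k * f k)" and "\<forall>k\<in>K. D (c k) = 0"
  shows "(D ^^ \<chi>) (f 0) = (\<Sum>k\<in>K. c k * (D ^^ \<chi>) (f k))"
  using assms by (simp add: D_iter_sum D_iter_mult_const)

lemma wronskian_identifiable:
  assumes rel: "f 0 = (\<Sum>k\<in>{1..m}. c k * f k)" and const: "\<forall>k\<in>{1..m}. D (c k) = 0"
    and indep: "indep_over_constants f {1..m}"
  shows "(\<forall>\<chi> \<le> m. (D ^^ \<chi>) (f 0) = (\<Sum>k\<in>{1..m}. \<gamma> k * (D ^^ \<chi>) (f k)))
           \<longleftrightarrow> (\<forall>k\<in>{1..m}. \<gamma> k = c k)"
proof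
  assume eqs: "\<forall>\<chi> \<le> m. (D ^^ \<chi>) (f 0) = (\<Sum>k\<in>{1..m}. \<gamma> k * (D ^^ \<chi>) (f k))"
  have "\<forall>\<chi> < card {1..m}. (\<Sum>k\<in>{1..m}. (\<gamma> k - c k) * (D ^^ \<chi>) (f k)) = 0"
  proof (intro allI impI)
    fix \<chi> assume "\<chi> < card {1..m}"
    then have "(D ^^ \<chi>) (f 0) = (\<Sum>k\<in>{1..m}. \<gamma> k * (D ^^ \<chi>) (f k))"
      using eqs by auto
    then show "(\<Sum>k\<in>{1..m}. (\<gamma> k - c k) * (D ^^ \<chi>) (f k)) = 0"
      unfolding left_diff_distrib sum_subtractf D_iter_relation[OF rel const, of \<chi>] by simp
  qed
  then have "\<forall>k\<in>{1..m}. \<gamma> k - c k = 0"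
    by (rule wronskian_vanishing_imp_zero[OF finite_atLeastAtMost indep])
  then show "\<forall>k\<in>{1..m}. \<gamma> k = c k" by simp
next
  assume "\<forall>k\<in>{1..m}. \<gamma> k = c k"
  then show "\<forall>\<chi> \<le> m. (D ^^ \<chi>) (f 0) = (\<Sum>k\<in>{1..m}. \<gamma> k * (D ^^ \<chi>) (f k))"
    by (simp add: D_iter_relation[OF rel const])
qed

end

lemma index_mat_mult_vec:
  "i < nr \<Longrightarrow> v \<in> carrier_vec nc \<Longrightarrow>
     (mat nr nc (\<lambda>(i, k). g i k) *\<^sub>v v) $ i = (\<Sum>k<nc. g i k * v $ k)"
  by (simp add: scalar_prod_def atLeast0LessThan)

lemma (in vec_space) rank_less_if_nontrivial_kernel:
  assumes "A \<in> carrier_mat n n" "v \<in> carrier_vec n" "v \<noteq> 0\<^sub>v n" "A *\<^sub>v v = 0\<^sub>v n"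
  shows "rank A < n"
proof -
  have "det A = 0"
    using det_0_iff_vec_prod_zero_field[OF assms(1)] assms(2-4) by blast
  then show ?thesis by (rule det_zero_low_rank[OF assms(1)])
qed

lemma (in vec_space) rank_ge_if_trivial_kernel:
  fixes B :: "'a mat"
  assumes A: "A \<in> carrier_mat n nc" and B: "B \<in> carrier_mat n k"
    and cols: "set (cols B) \<subseteq> set (cols A)"
    and kernel: "\<And>v. v \<in> carrier_vec k \<Longrightarrow> B *\<^sub>v v = 0\<^sub>v n \<Longrightarrow> v = 0\<^sub>v k"
  shows "k \<le> rank A"
proof -
  have distinct: "distinct (cols B)"
  proof (rule ccontr)
    assume "\<not> distinct (cols B)"
    then obtain i j where "i \<noteq> j" "i < length (cols B)" "j < length (cols B)" "cols B ! i = cols B ! j"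
      by (auto simp: distinct_conv_nth)
    then have ij: "i \<noteq> j" "i < k" "j < k" "col B i = col B j"
      using B by auto
    define v :: "'a vec" where "v = unit_vec k i - unit_vec k j"
    have v: "v \<in> carrier_vec k" by (simp add: v_def)
    have "B *\<^sub>v v = 0\<^sub>v n"
    proof (rule eq_vecI)
      fix r assume "r < dim_vec (0\<^sub>v n :: 'a vec)"
      then have r: "r < n" by simp
      have "(B *\<^sub>v v) $ r = row B r \<bullet> unit_vec k i - row B r \<bullet> unit_vec k j"
        using B r by (simp add: v_def scalar_prod_minus_distrib[of _ k])
      also have "\<dots> = col B i $ r - col B j $ r"
        using B r ij(2,3) by simp
      finally show "(B *\<^sub>v v) $ r = 0\<^sub>v n $ r" using ij(4) r by simp
    qed (use B in simp)
    then have "v = 0\<^sub>v k" by (rule kernel[OF v])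
    moreover have "v $ i = 1" using ij by (simp add: v_def)
    ultimately show False using ij(2) by simp
  qed
  have "lin_indpt (set (cols B))"
  proof
    assume "lin_dep (set (cols B))"
    then obtain v where "v \<in> carrier_vec k" "v \<noteq> 0\<^sub>v k" "B *\<^sub>v v = 0\<^sub>v n"
      by (rule lin_depE[OF B _ distinct])
    then show False using kernel by blast
  qed
  then have "card (set (cols B)) \<le> rank A"
    by (rule rank_ge_card_indpt[OF A cols])
  then show ?thesis using distinct_card[OF distinct] B by simp
qed

lemma (in field_derivation) wronskian_rank_less:
  assumes rel: "f 0 = (\<Sum>k\<in>{1..m}. c k * f k)" and const: "\<forall>k\<in>{1..m}. D (c k) = 0"
  shows "vec_space.rank (Suc m) (mat (Suc m) (Suc m) (\<lambda>(\<chi>, k). (D ^^ \<chi>) (f k))) < Suc m"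
proof -
  interpret vec_space "TYPE('a)" "Suc m" .
  define W where "W = mat (Suc m) (Suc m) (\<lambda>(\<chi>, k). (D ^^ \<chi>) (f k))"
  have W: "W \<in> carrier_mat (Suc m) (Suc m)" by (simp add: W_def)
  define w :: "'a vec" where "w = vec (Suc m) (\<lambda>k. if k = 0 then 1 else - c k)"
  have w: "w \<in> carrier_vec (Suc m)" "w \<noteq> 0\<^sub>v (Suc m)"
    by (auto simp: w_def vec_eq_iff intro!: exI[of _ 0])
  have "W *\<^sub>v w = 0\<^sub>v (Suc m)"
  proof (rule eq_vecI)
    fix \<chi> assume "\<chi> < dim_vec (0\<^sub>v (Suc m) :: 'a vec)"
    then have "(W *\<^sub>v w) $ \<chi> = (\<Sum>k<Suc m. (D ^^ \<chi>) (f k) * w $ k)"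
      using w(1) unfolding W_def by (simp only: index_zero_vec) (rule index_mat_mult_vec)
    also have "\<dots> = (D ^^ \<chi>) (f 0) - (\<Sum>k<m. c (Suc k) * (D ^^ \<chi>) (f (Suc k)))"
      unfolding sum.lessThan_Suc_shift
      by (auto simp: w_def sum_negf[symmetric] intro!: sum.cong)
    also have "\<dots> = 0"
      using D_iter_relation[OF rel const, of \<chi>] by (simp add: sum.atLeast1_atMost_eq)
    finally show "(W *\<^sub>v w) $ \<chi> = 0\<^sub>v (Suc m) $ \<chi>"
      using \<open>\<chi> < dim_vec _\<close> by simp
  qed (simp add: W_def)
  then show ?thesis
    using rank_less_if_nontrivial_kernel[OF W w] by (simp add: W_def)
qed

lemma (in field_derivation) wronskian_rank_ge:
  assumes indep: "indep_over_constants f {1..m}"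
  shows "m \<le> vec_space.rank (Suc m) (mat (Suc m) (Suc m) (\<lambda>(\<chi>, k). (D ^^ \<chi>) (f k)))"
proof -
  interpret vec_space "TYPE('a)" "Suc m" .
  define W where "W = mat (Suc m) (Suc m) (\<lambda>(\<chi>, k). (D ^^ \<chi>) (f k))"
  define B where "B = mat (Suc m) m (\<lambda>(\<chi>, k). (D ^^ \<chi>) (f (Suc k)))"
  have "m \<le> rank W"
  proof (rule rank_ge_if_trivial_kernel)
    show W: "W \<in> carrier_mat (Suc m) (Suc m)" and "B \<in> carrier_mat (Suc m) m"
      by (simp_all add: W_def B_def)
    show "set (cols B) \<subseteq> set (cols W)"
    proof
      fix y assume "y \<in> set (cols B)"
      then obtain k where k: "k < m" "y = col B k" by (auto simp: cols_def B_def)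
      then have "y = col W (Suc k)" by (simp add: B_def W_def)
      then show "y \<in> set (cols W)"
        unfolding cols_def set_map by (rule image_eqI) (use k(1) W in auto)
    qed
    fix v :: "'a vec" assume v: "v \<in> carrier_vec m" and Bv: "B *\<^sub>v v = 0\<^sub>v (Suc m)"
    have "\<forall>\<chi> < card {1..m}. (\<Sum>k\<in>{1..m}. v $ (k - 1) * (D ^^ \<chi>) (f k)) = 0"
    proof (intro allI impI)
      fix \<chi> assume "\<chi> < card {1..m}"
      then have "(B *\<^sub>v v) $ \<chi> = 0" using Bv by simp
      moreover have "(B *\<^sub>v v) $ \<chi> = (\<Sum>k<m. (D ^^ \<chi>) (f (Suc k)) * v $ k)"
        using \<open>\<chi> < card {1..m}\<close> v unfolding B_def by (intro index_mat_mult_vec) simp_all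
      ultimately show "(\<Sum>k\<in>{1..m}. v $ (k - 1) * (D ^^ \<chi>) (f k)) = 0"
        by (simp add: sum.atLeast1_atMost_eq mult.commute)
    qed
    then have zero: "\<forall>k\<in>{1..m}. v $ (k - 1) = 0"
      by (rule wronskian_vanishing_imp_zero[OF finite_atLeastAtMost indep])
    have "v $ i = 0" if "i < m" for i
    proof -
      have "Suc i \<in> {1..m}" using that by simp
      with zero have "v $ (Suc i - 1) = 0" by blast
      then show ?thesis by simp
    qed
    then show "v = 0\<^sub>v m"
      using v by (intro eq_vecI) auto
  qed
  then show ?thesis by (simp add: W_def)
qed

lemma (in field_derivation) wronskian_rank:
  assumes "f 0 = (\<Sum>k\<in>{1..m}. c k * f k)" and "\<forall>k\<in>{1..m}. D (c k) = 0"
    and "indep_over_constants f {1..m}"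
  shows "vec_space.rank (Suc m) (mat (Suc m) (Suc m) (\<lambda>(\<chi>, k). (D ^^ \<chi>) (f k))) = m"
  using wronskian_rank_less[OF assms(1,2)] wronskian_rank_ge[OF assms(3)] by simp

section \<open>Rational functions as a differential field\<close>

lemma rf_deriv_Fract_wd:
  fixes p q p' q' :: "real poly"
  assumes "q \<noteq> 0" "q' \<noteq> 0" "p * q' = p' * q"
  shows "Fract (pderiv p * q - p * pderiv q) (q * q) = Fract (pderiv p' * q' - p' * pderiv q') (q' * q')"
proof -
  have d: "pderiv p * q' + p * pderiv q' = pderiv p' * q + p' * pderiv q"
    using arg_cong[OF assms(3), of pderiv] by (simp add: pderiv_mult algebra_simps)
  have "(pderiv p * q - p * pderiv q) * (q' * q') = (pderiv p' * q' - p' * pderiv q') * (q * q)"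
  proof -
    have "(pderiv p * q - p * pderiv q) * (q' * q') = q * q' * (pderiv p * q') - pderiv q * q' * (p * q')"
      by (simp add: algebra_simps)
    also have "\<dots> = q * q' * (pderiv p' * q + p' * pderiv q - p * pderiv q') - pderiv q * q' * (p' * q)"
    proof -
      have "pderiv p * q' = pderiv p' * q + p' * pderiv q - p * pderiv q'"
        using d by (simp add: algebra_simps)
      then show ?thesis by (simp only: assms(3))
    qed
    also have "\<dots> = q * q * q' * pderiv p' - q * pderiv q' * (p' * q)"
      using assms(3) by (simp add: algebra_simps)
    finally show ?thesis by (simp add: algebra_simps)
  qed
  then show ?thesis using assms by (simp add: eq_fract)
qed

lemma rf_deriv_Fract:
  fixes p q :: "real poly"
  assumes "q \<noteq> 0"
  shows "rf_deriv (Fract p q) = Fract (pderiv p * q - p * pderiv q) (q * q)"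
proof -
  let ?R = "\<lambda>(p', q'). q' \<noteq> 0 \<and> Fract p q = Fract p' q'"
  obtain p' q' where pq: "(SOME pq. ?R pq) = (p', q')" by (cases "SOME pq. ?R pq")
  have "?R (SOME pq. ?R pq)" by (rule someI[of ?R "(p, q)"]) (simp add: assms)
  then have "q' \<noteq> 0" "Fract p q = Fract p' q'" by (simp_all add: pq)
  then have "q' \<noteq> 0" "p * q' = p' * q" using assms by (simp_all add: eq_fract)
  then show ?thesis
    unfolding rf_deriv_def pq using rf_deriv_Fract_wd[OF assms, symmetric] by simp
qed

interpretation rf: field_derivation rf_deriv
proof
  fix r s :: "real poly fract"
  obtain a b c d where r: "r = Fract a b" "b \<noteq> 0" and s: "s = Fract c d" "d \<noteq> 0"
    by (cases r, cases s)
  show "rf_deriv (r + s) = rf_deriv r + rf_deriv s" "rf_deriv (r * s) = rf_deriv r * s + r * rf_deriv s"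
    using r s by (simp_all add: rf_deriv_Fract eq_fract pderiv_mult pderiv_add algebra_simps)
qed

lemma pderiv_eq_0_if_dvd:
  fixes p :: "'a::{idom, ring_char_0} poly"
  assumes "p dvd pderiv p" shows "pderiv p = 0"
proof (rule ccontr)
  assume nz: "pderiv p \<noteq> 0"
  then have "degree p \<le> degree (pderiv p)" using dvd_imp_degree_le assms by blast
  moreover have "degree p \<noteq> 0" using nz pderiv_eq_0_iff by blast
  ultimately show False by (simp add: degree_pderiv)
qed

text \<open>Write r = p/q in lowest terms; r' = 0 means p' q = p q', which forces p | p' and q | q',
  so p and q are constant.\<close>
lemma rf_deriv_eq_0_iff: "rf_deriv r = 0 \<longleftrightarrow> (\<exists>c. r = rf_const c)"
proof
  assume "rf_deriv r = 0"
  obtain p0 q0 where r0: "r = Fract p0 q0" "q0 \<noteq> 0" by (cases r)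
  then obtain p q where pq: "p0 = p * gcd p0 q0" "q0 = q * gcd p0 q0" "coprime p q"
    using gcd_coprime_exists by (metis gcd_eq_0_iff)
  then have r: "r = Fract p q" "q \<noteq> 0" "coprime p q"
    using r0 by (metis mult.commute mult_fract_cancel gcd_eq_0_iff mult_zero_left)+
  have "pderiv p * q = p * pderiv q"
    using \<open>rf_deriv r = 0\<close> r by (simp add: rf_deriv_Fract eq_fract Zero_fract_def)
  then have "p dvd pderiv p * q" "q dvd p * pderiv q" by (metis dvd_triv_right dvd_triv_left)+
  then have "pderiv p = 0" "pderiv q = 0"
    using r(3) by (auto intro: pderiv_eq_0_if_dvd
        simp: coprime_dvd_mult_left_iff coprime_dvd_mult_right_iff coprime_commute)
  then obtain c d where "p = [:c:]" "q = [:d:]" by (metis pderiv_iszero)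
  then show "\<exists>c. r = rf_const c"
    using r(1,2) by (intro exI[of _ "c / d"]) (simp add: rf_const_def rf_of_poly_def eq_fract)
qed (auto simp: rf_const_def rf_of_poly_def rf_deriv_Fract Zero_fract_def)

lemma rf_of_poly_add: "rf_of_poly (p + q) = rf_of_poly p + rf_of_poly q"
  by (simp add: rf_of_poly_def)

lemma rf_of_poly_diff: "rf_of_poly (p - q) = rf_of_poly p - rf_of_poly q"
  by (simp add: rf_of_poly_def)

lemma rf_of_poly_mult: "rf_of_poly (p * q) = rf_of_poly p * rf_of_poly q"
  by (simp add: rf_of_poly_def)

lemma rf_of_poly_eq_0_iff: "rf_of_poly p = 0 \<longleftrightarrow> p = 0"
  by (simp add: rf_of_poly_def Zero_fract_def eq_fract)

lemma rf_of_poly_0 [simp]: "rf_of_poly 0 = 0"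
  by (simp add: rf_of_poly_def Zero_fract_def)

lemma rf_of_poly_sum: "rf_of_poly (\<Sum>i\<in>A. f i) = (\<Sum>i\<in>A. rf_of_poly (f i))"
  by (induction A rule: infinite_finite_induct) (simp_all add: rf_of_poly_add)

lemma rf_of_poly_monom: "rf_of_poly (monom c k) = rf_const c * rf_z_pow k"
  by (simp add: rf_of_poly_def rf_const_def rf_z_pow_def smult_monom)

lemma rf_const_0 [simp]: "rf_const 0 = 0"
  by (simp add: rf_const_def)

lemma rf_const_1 [simp]: "rf_const 1 = 1"
  by (simp add: rf_const_def rf_of_poly_def One_fract_def one_pCons)

lemma rf_indep_over_constants_if_real:
  assumes "\<forall>r. (\<Sum>i\<in>I. rf_const (r i) * f i) = 0 \<longrightarrow> (\<forall>i\<in>I. r i = 0)"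
  shows "rf.indep_over_constants f I"
  unfolding rf.indep_over_constants_def
proof (intro allI impI)
  fix c assume const: "\<forall>i\<in>I. rf_deriv (c i) = 0" and "(\<Sum>i\<in>I. c i * f i) = 0"
  define r where "r i = (SOME s. c i = rf_const s)" for i
  have c: "c i = rf_const (r i)" if "i \<in> I" for i
    using const that unfolding r_def rf_deriv_eq_0_iff by (metis (mono_tags) someI_ex)
  then have "(\<Sum>i\<in>I. rf_const (r i) * f i) = 0"
    using \<open>(\<Sum>i\<in>I. c i * f i) = 0\<close> by (simp cong: sum.cong)
  then have "\<forall>i\<in>I. r i = 0" using assms by blast
  then show "\<forall>i\<in>I. c i = 0" using c by simp
qed

section \<open>Annihilating polynomials and expansions at infinity\<close>

definition annihilates :: "'a::comm_semiring_1 poly \<Rightarrow> (nat \<Rightarrow> 'a) \<Rightarrow> bool" where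
  "annihilates C x \<longleftrightarrow> (\<forall>t. (\<Sum>k\<le>degree C. coeff C k * x (t + k)) = 0)"

text \<open>The polynomial part of C(z) (x(0)/z + x(1)/z^2 + ...); when C annihilates x it is
  the whole product.\<close>
definition initial_poly :: "'a::comm_semiring_1 poly \<Rightarrow> (nat \<Rightarrow> 'a) \<Rightarrow> 'a poly" where
  "initial_poly C x = (\<Sum>k\<le>degree C. \<Sum>t<k. monom (coeff C k * x t) (k - t - 1))"

lemma poly_initial_poly:
  "poly (initial_poly C x) z = (\<Sum>k\<le>degree C. coeff C k * (\<Sum>t<k. x t * z ^ (k - t - 1)))"
  by (simp add: initial_poly_def poly_sum poly_monom sum_distrib_left mult.assoc)

lemma coeff_initial_poly:
  "coeff (initial_poly C x) m = (\<Sum>k\<le>degree C. coeff C k * (if m < k then x (k - m - 1) else 0))"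
proof -
  have "(\<Sum>t<k. if k - t - 1 = m then c * x t else 0) = c * (if m < k then x (k - m - 1) else 0)"
    for k and c :: 'a
  proof -
    have "(\<Sum>t<k. if k - t - 1 = m then c * x t else 0)
        = (\<Sum>t<k. if t = k - m - 1 \<and> m < k then c * x t else 0)"
      by (intro sum.cong) auto
    then show ?thesis by (simp add: sum.delta')
  qed
  then show ?thesis by (simp add: initial_poly_def coeff_sum coeff_monom)
qed

lemma degree_initial_poly: "0 < degree C \<Longrightarrow> degree (initial_poly C x) < degree C"
  unfolding initial_poly_def
  by (intro degree_sum_less) (auto intro: le_less_trans[OF degree_monom_le])

text \<open>Expansions at z = \<infinity> as formal Laurent series, with fls_X standing for 1/z.\<close>
definition fls_of_poly_inv :: "'a::field poly \<Rightarrow> 'a fls" where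
  "fls_of_poly_inv C = poly (map_poly fls_const C) fls_X_inv"

definition fls_of_seq :: "(nat \<Rightarrow> 'a::field) \<Rightarrow> 'a fls" where
  "fls_of_seq x = Abs_fls (\<lambda>i. if i \<ge> 1 then x (nat (i - 1)) else 0)"

lemma fls_nth_fls_of_seq: "fls_nth (fls_of_seq x) i = (if i \<ge> 1 then x (nat (i - 1)) else 0)"
  unfolding fls_of_seq_def by (rule nth_Abs_fls_lower_bound[of 0]) auto

lemma fls_const_sum: "fls_const (\<Sum>i\<in>A. f i) = (\<Sum>i\<in>A. fls_const (f i))"
  by (induction A rule: infinite_finite_induct) (auto simp: fls_plus_const[symmetric])

lemma fls_of_poly_inv_add: "fls_of_poly_inv (p + q) = fls_of_poly_inv p + fls_of_poly_inv q"
proof -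
  have "map_poly fls_const (p + q) = map_poly fls_const p + map_poly fls_const q"
    by (intro poly_eqI) (simp add: coeff_map_poly fls_plus_const)
  then show ?thesis by (simp add: fls_of_poly_inv_def)
qed

lemma fls_of_poly_inv_mult: "fls_of_poly_inv (p * q) = fls_of_poly_inv p * fls_of_poly_inv q"
proof -
  have "map_poly fls_const (p * q) = map_poly fls_const p * map_poly fls_const q"
    by (intro poly_eqI) (simp add: coeff_map_poly coeff_mult fls_const_sum)
  then show ?thesis by (simp add: fls_of_poly_inv_def)
qed

lemma fls_of_poly_inv_altdef:
  "fls_of_poly_inv C = (\<Sum>k\<le>degree C. fls_const (coeff C k) * fls_X_inv ^ k)"
  unfolding fls_of_poly_inv_def poly_altdef by (simp add: coeff_map_poly degree_map_poly)

lemma fls_nth_fls_of_poly_inv_mult: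
  "fls_nth (fls_of_poly_inv C * F) i = (\<Sum>k\<le>degree C. coeff C k * fls_nth F (i + int k))"
proof -
  have "fls_of_poly_inv C * F = (\<Sum>k\<le>degree C. fls_const (coeff C k) * (fls_X_inv ^ k * F))"
    by (simp add: fls_of_poly_inv_altdef sum_distrib_right mult.assoc)
  then show ?thesis by (simp add: fls_nth_sum fls_X_inv_power_times_conv_shift)
qed

lemma fls_nth_fls_of_poly_inv: "fls_nth (fls_of_poly_inv C) i = (if i \<le> 0 then coeff C (nat (-i)) else 0)"
proof -
  have "fls_nth (fls_of_poly_inv C) i = (\<Sum>k\<le>degree C. if k = nat (-i) \<and> i \<le> 0 then coeff C k else 0)"
    using fls_nth_fls_of_poly_inv_mult[of C 1 i] by (auto intro!: sum.cong)
  also have "\<dots> = (if i \<le> 0 then coeff C (nat (-i)) else 0)"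
    by (cases "i \<le> 0") (simp_all add: sum.delta coeff_eq_0)
  finally show ?thesis .
qed

lemma fls_of_poly_inv_eq_0_iff: "fls_of_poly_inv C = 0 \<longleftrightarrow> C = 0"
proof
  assume "fls_of_poly_inv C = 0"
  then have "coeff C m = 0" for m
    using fls_nth_fls_of_poly_inv[of C "- int m"] by simp
  then show "C = 0" by (simp add: poly_eqI)
qed (simp add: fls_of_poly_inv_def)

lemma fls_nth_fls_of_poly_inv_mult_seq:
  "fls_nth (fls_of_poly_inv C * fls_of_seq x) (int t + 1) = (\<Sum>k\<le>degree C. coeff C k * x (t + k))"
  by (simp add: fls_nth_fls_of_poly_inv_mult fls_nth_fls_of_seq nat_add_distrib)

lemma annihilates_iff_fls:
  "annihilates C x \<longleftrightarrow> (\<forall>i > 0. fls_nth (fls_of_poly_inv C * fls_of_seq x) i = 0)"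
proof -
  have "(\<forall>i > 0. P i) \<longleftrightarrow> (\<forall>t. P (int t + 1))" for P :: "int \<Rightarrow> bool"
  proof (intro iffI allI impI)
    fix i :: int assume P: "\<forall>t. P (int t + 1)" and "i > 0"
    then show "P i" using P[rule_format, of "nat (i - 1)"] by simp
  qed simp
  then show ?thesis
    by (simp add: annihilates_def fls_nth_fls_of_poly_inv_mult_seq)
qed

lemma fls_of_poly_inv_mult_seq:
  assumes "annihilates C x"
  shows "fls_of_poly_inv C * fls_of_seq x = fls_of_poly_inv (initial_poly C x)"
proof (rule fls_eqI)
  fix i :: int
  show "fls_nth (fls_of_poly_inv C * fls_of_seq x) i = fls_nth (fls_of_poly_inv (initial_poly C x)) i"
  proof (cases "i > 0")
    case True
    then show ?thesis using assms by (simp add: annihilates_iff_fls fls_nth_fls_of_poly_inv)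
  next
    case False
    define m where "m = nat (- i)"
    have i: "i = - int m" using False by (simp add: m_def)
    have "fls_nth (fls_of_seq x) (i + int k) = (if m < k then x (k - m - 1) else 0)" for k
      by (simp add: fls_nth_fls_of_seq i nat_diff_distrib')
    then show ?thesis
      by (simp add: fls_nth_fls_of_poly_inv_mult fls_nth_fls_of_poly_inv coeff_initial_poly i)
  qed
qed

lemma annihilates_if_fls_eq:
  "fls_of_poly_inv C * fls_of_seq x = fls_of_poly_inv D \<Longrightarrow> annihilates C x"
  by (simp add: annihilates_iff_fls fls_nth_fls_of_poly_inv)

text \<open>If Q annihilates x, then x(0)/z + x(1)/z^2 + ... = initial_poly Q x / Q, so a relation
  C * initial_poly Q x + D * Q = 0 says that C times the expansion of x is a polynomial.\<close>
lemma annihilates_of_relation: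
  fixes Q C D :: "'a::field poly"
  assumes "annihilates Q x" "Q \<noteq> 0" "C * initial_poly Q x + D * Q = 0"
  shows "annihilates C x"
proof (rule annihilates_if_fls_eq)
  let ?S = "fls_of_seq x"
  have "fls_of_poly_inv Q * (fls_of_poly_inv C * ?S + fls_of_poly_inv D)
      = fls_of_poly_inv (C * initial_poly Q x + D * Q)"
    using fls_of_poly_inv_mult_seq[OF assms(1)]
    by (simp add: fls_of_poly_inv_add fls_of_poly_inv_mult algebra_simps)
  also have "\<dots> = 0" using assms(3) by (simp add: fls_of_poly_inv_def)
  finally have "fls_of_poly_inv C * ?S + fls_of_poly_inv D = 0"
    using assms(2) fls_of_poly_inv_eq_0_iff by auto
  moreover have "fls_of_poly_inv (- D) + fls_of_poly_inv D = 0"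
    using fls_of_poly_inv_add[of "- D" D] by (simp add: fls_of_poly_inv_def)
  ultimately have "fls_of_poly_inv C * ?S + fls_of_poly_inv D = fls_of_poly_inv (- D) + fls_of_poly_inv D"
    by (simp only:)
  then show "fls_of_poly_inv C * ?S = fls_of_poly_inv (- D)"
    by (rule add_right_imp_eq)
qed

lemma sums_shift_power:
  fixes z s :: "'a::real_normed_field"
  assumes "z \<noteq> 0" and "(\<lambda>t. x t / z ^ (t + 1)) sums s"
  shows "(\<lambda>t. x (t + k) / z ^ (t + 1)) sums (z ^ k * s - (\<Sum>t<k. x t * z ^ (k - t - 1)))"
proof -
  have "(\<lambda>t. z ^ k * (x t / z ^ (t + 1))) sums (z ^ k * s)"
    by (rule sums_mult[OF assms(2)])
  then have "(\<lambda>t. z ^ k * (x (t + k) / z ^ (t + k + 1)))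
      sums (z ^ k * s - (\<Sum>t<k. z ^ k * (x t / z ^ (t + 1))))"
    using sums_iff_shift[of "\<lambda>t. z ^ k * (x t / z ^ (t + 1))" k] by simp
  moreover have "z ^ k * (x (t + k) / z ^ (t + k + 1)) = x (t + k) / z ^ (t + 1)" for t
    using assms(1) by (simp add: power_add field_simps)
  moreover have "z ^ k * (x t / z ^ (t + 1)) = x t * z ^ (k - t - 1)" if "t < k" for t
  proof -
    have "k = (k - t - 1) + (t + 1)" using that by simp
    then have "z ^ k = z ^ (k - t - 1) * z ^ (t + 1)" by (metis power_add)
    then show ?thesis using assms(1) by (simp add: field_simps)
  qed
  ultimately show ?thesis by simp
qed

lemma poly_mult_sums_eq_initial_poly:
  fixes z s :: "'a::real_normed_field"
  assumes "annihilates C x" and "z \<noteq> 0" and "(\<lambda>t. x t / z ^ (t + 1)) sums s"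
  shows "poly C z * s = poly (initial_poly C x) z"
proof -
  have "(\<lambda>t. coeff C k * (x (t + k) / z ^ (t + 1)))
      sums (coeff C k * (z ^ k * s - (\<Sum>t<k. x t * z ^ (k - t - 1))))" for k
    using sums_shift_power[OF assms(2,3)] by (rule sums_mult)
  then have "(\<lambda>t. \<Sum>k\<le>degree C. coeff C k * (x (t + k) / z ^ (t + 1)))
      sums (\<Sum>k\<le>degree C. coeff C k * (z ^ k * s - (\<Sum>t<k. x t * z ^ (k - t - 1))))"
    by (rule sums_sum)
  moreover have "(\<Sum>k\<le>degree C. coeff C k * (x (t + k) / z ^ (t + 1))) = 0" for t
    using assms(1) by (simp add: annihilates_def sum_divide_distrib[symmetric])
  ultimately have "(\<lambda>t. 0) sums (\<Sum>k\<le>degree C. coeff C k * (z ^ k * s - (\<Sum>t<k. x t * z ^ (k - t - 1))))"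
    by simp
  then have "(\<Sum>k\<le>degree C. coeff C k * (z ^ k * s - (\<Sum>t<k. x t * z ^ (k - t - 1)))) = 0"
    by (rule sums_unique2[OF _ sums_zero])
  then show ?thesis
    unfolding poly_initial_poly poly_altdef[of C]
    by (simp add: right_diff_distrib sum_subtractf sum_distrib_right mult.assoc mult.left_commute)
qed

text \<open>Both sides agree at all large z avoiding the roots of qX, hence everywhere.\<close>
lemma mult_eq_initial_poly_mult_if_expansion:
  fixes C pX qX :: "real poly"
  assumes "annihilates C x" and "qX \<noteq> 0"
    and "\<exists>R. \<forall>z :: real. \<bar>z\<bar> > R \<longrightarrow> (\<lambda>t. x t / z ^ (t + 1)) sums (poly pX z / poly qX z)"
  shows "C * pX = initial_poly C x * qX"
proof (rule ccontr)
  obtain R where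
    R: "\<And>z :: real. \<bar>z\<bar> > R \<Longrightarrow> (\<lambda>t. x t / z ^ (t + 1)) sums (poly pX z / poly qX z)"
    using assms(3) by blast
  let ?E = "C * pX - initial_poly C x * qX"
  assume "C * pX \<noteq> initial_poly C x * qX"
  then have "finite {z. poly ?E z = 0}" by (intro poly_roots_finite) simp
  moreover have "finite {z. poly qX z = 0}" using assms(2) by (rule poly_roots_finite)
  ultimately have "finite ({z. poly ?E z = 0} \<union> {z. poly qX z = 0})" by (rule finite_UnI)
  moreover have "{max R 0<..} \<subseteq> {z. poly ?E z = 0} \<union> {z. poly qX z = 0}"
  proof
    fix z assume "z \<in> {max R 0<..}"
    then have "z \<noteq> 0" "\<bar>z\<bar> > R" by auto
    then have "poly C z * (poly pX z / poly qX z) = poly (initial_poly C x) z"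
      using assms(1) R by (intro poly_mult_sums_eq_initial_poly) auto
    then show "z \<in> {z. poly ?E z = 0} \<union> {z. poly qX z = 0}"
      by (cases "poly qX z = 0") (simp_all add: field_simps)
  qed
  ultimately show False
    using infinite_Ioi finite_subset by blast
qed

lemma annihilates_imp_recurrence:
  fixes C :: "'a::field poly"
  assumes "annihilates C x" and "C \<noteq> 0"
  shows "\<exists>c. \<forall>t. x (t + degree C) = (\<Sum>i = 1..degree C. c i * x (t + degree C - i))"
proof
  let ?d = "degree C"
  have L: "lead_coeff C \<noteq> 0" using assms(2) by simp
  show "\<forall>t. x (t + ?d) = (\<Sum>i = 1..?d. - coeff C (?d - i) / lead_coeff C * x (t + ?d - i))"
  proof
    fix t
    have "(\<Sum>i = 1..?d. - coeff C (?d - i) / lead_coeff C * x (t + ?d - i))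
        = (\<Sum>i<?d. - coeff C (?d - Suc i) / lead_coeff C * x (t + (?d - Suc i)))"
      by (simp add: sum.atLeast1_atMost_eq)
    also have "\<dots> = (\<Sum>k<?d. - coeff C k / lead_coeff C * x (t + k))"
      by (rule sum.nat_diff_reindex)
    also have "\<dots> = - (\<Sum>k<?d. coeff C k * x (t + k)) / lead_coeff C"
      by (simp add: sum_divide_distrib sum_negf)
    also have "\<dots> = x (t + ?d)"
    proof -
      have "(\<Sum>k<?d. coeff C k * x (t + k)) + lead_coeff C * x (t + ?d) = 0"
        using assms(1) by (simp add: annihilates_def lessThan_Suc_atMost[symmetric])
      then have "lead_coeff C * x (t + ?d) = - (\<Sum>k<?d. coeff C k * x (t + k))"
        by (simp add: eq_neg_iff_add_eq_0 add.commute)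
      then show ?thesis using L by (simp add: field_simps)
    qed
    finally show "x (t + ?d) = (\<Sum>i = 1..?d. - coeff C (?d - i) / lead_coeff C * x (t + ?d - i))" ..
  qed
qed

definition recurrence_poly :: "nat \<Rightarrow> (nat \<Rightarrow> 'a::comm_ring_1) \<Rightarrow> 'a poly" where
  "recurrence_poly n a = monom 1 n - (\<Sum>i = 1..n. monom (a i) (n - i))"

lemma coeff_recurrence_poly:
  "coeff (recurrence_poly n a) k = (if k = n then 1 else 0) - (\<Sum>i = 1..n. if n - i = k then a i else 0)"
  by (simp add: recurrence_poly_def coeff_diff coeff_sum coeff_monom)

lemma degree_recurrence_poly: "degree (recurrence_poly n a) = n"
proof (rule antisym)
  show "degree (recurrence_poly n a) \<le> n"
    unfolding recurrence_poly_def
    by (auto intro!: degree_diff_le degree_sum_le order.trans[OF degree_monom_le])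
  have "(\<Sum>i = 1..n. if n - i = n then a i else 0) = 0"
    by (intro sum.neutral) auto
  then show "n \<le> degree (recurrence_poly n a)"
    by (intro le_degree) (simp add: coeff_recurrence_poly)
qed

lemma annihilates_recurrence_poly:
  assumes "\<forall>t. x (t + n) = (\<Sum>i = 1..n. a i * x (t + n - i))"
  shows "annihilates (recurrence_poly n a) x"
  unfolding annihilates_def degree_recurrence_poly
proof
  fix t
  have "(\<Sum>k\<le>n. \<Sum>i = 1..n. if n - i = k then a i * x (t + k) else 0) = (\<Sum>i = 1..n. a i * x (t + n - i))"
    by (subst sum.swap) (auto intro!: sum.cong)
  then show "(\<Sum>k\<le>n. coeff (recurrence_poly n a) k * x (t + k)) = 0"
    using assms by (simp add: coeff_recurrence_poly left_diff_distrib sum_subtractf sum_distrib_right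
        if_distrib[where f = "\<lambda>c. c * _"] cong: if_cong)
qed

lemma degree_annihilator_ge:
  fixes C :: "'a::field poly"
  assumes "\<not> (\<exists>m < n. \<exists>c. \<forall>t. x (t + m) = (\<Sum>i = 1..m. c i * x (t + m - i)))"
    and "C \<noteq> 0" and "annihilates C x"
  shows "n \<le> degree C"
  using assms annihilates_imp_recurrence[of C x] by (metis not_le)

section \<open>The Wronskian family of the theorem\<close>

lemma coeffs_eq_0_if_sum_monom_eq_0:
  assumes "inj_on e A" "finite A" "(\<Sum>k\<in>A. monom (r k) (e k)) = 0"
  shows "\<forall>k\<in>A. r k = 0"
proof
  fix k assume "k \<in> A"
  have "coeff (\<Sum>j\<in>A. monom (r j) (e j)) (e k) = (\<Sum>j\<in>A. if j = k then r j else 0)"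
    using inj_on_eq_iff[OF assms(1) _ \<open>k \<in> A\<close>] by (auto simp: coeff_sum coeff_monom intro!: sum.cong)
  then show "r k = 0" using assms(2,3) \<open>k \<in> A\<close> by simp
qed

lemma poly_eq_sum_monom_desc:
  assumes "degree p < n"
  shows "p = (\<Sum>j<n. monom (coeff p (n - 1 - j)) (n - 1 - j))"
proof -
  have "(\<Sum>j<n. monom (coeff p (n - 1 - j)) (n - 1 - j)) = (\<Sum>i<n. monom (coeff p i) i)"
    using sum.nat_diff_reindex[of "\<lambda>i. monom (coeff p i) i" n] by simp
  also have "\<dots> = p"
    using assms poly_as_sum_of_monoms'[of p "n - 1"] by (cases n) (simp_all add: lessThan_Suc_atMost)
  finally show ?thesis ..
qed

lemma atLeastAtMost_double: "{1..2 * n} = {1..n} \<union> (\<lambda>j. j + Suc n) ` {..<n}"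
proof -
  have "k \<in> {1..n} \<union> (\<lambda>j. j + Suc n) ` {..<n}" if "k \<in> {1..2 * n}" for k
  proof (cases "k \<le> n")
    case False
    then show ?thesis using that by (intro UnI2 image_eqI[of _ _ "k - Suc n"]) auto
  qed (use that in auto)
  then show ?thesis by (intro equalityI subsetI) auto
qed

definition wronskian_family :: "nat \<Rightarrow> real poly fract \<Rightarrow> nat \<Rightarrow> real poly fract" where
  "wronskian_family n X k = (if k \<le> n then rf_z_pow (n - k) * X else rf_z_pow (2 * n - k))"

lemma sum_wronskian_family:
  "(\<Sum>k\<in>{1..2 * n}. h k (wronskian_family n X k))
     = (\<Sum>i = 1..n. h i (rf_z_pow (n - i) * X)) + (\<Sum>j<n. h (j + Suc n) (rf_z_pow (n - 1 - j)))"
proof -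
  have "(\<Sum>k\<in>{1..2 * n}. h k (wronskian_family n X k))
      = (\<Sum>i = 1..n. h i (wronskian_family n X i))
        + (\<Sum>j<n. h (j + Suc n) (wronskian_family n X (j + Suc n)))"
    unfolding atLeastAtMost_double by (subst sum.union_disjoint) (auto simp: sum.reindex inj_on_def)
  also have "(\<Sum>i = 1..n. h i (wronskian_family n X i)) = (\<Sum>i = 1..n. h i (rf_z_pow (n - i) * X))"
    by (intro sum.cong) (auto simp: wronskian_family_def)
  also have "(\<Sum>j<n. h (j + Suc n) (wronskian_family n X (j + Suc n)))
      = (\<Sum>j<n. h (j + Suc n) (rf_z_pow (n - 1 - j)))"
    by (intro sum.cong) (auto simp: wronskian_family_def)
  finally show ?thesis .
qed

text \<open>A real relation between the family reads C X + E = 0 with deg C, deg E < n. Multiplying by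
  Q turns it into C * initial_poly Q x + E * Q = 0, so C annihilates x; minimality forces C = 0,
  and then E = 0.\<close>
lemma wronskian_family_indep:
  fixes Q :: "real poly"
  assumes ann: "annihilates Q x" and Q: "Q \<noteq> 0"
    and QX: "rf_of_poly Q * X = rf_of_poly (initial_poly Q x)"
    and minimal: "\<forall>C. C \<noteq> 0 \<longrightarrow> annihilates C x \<longrightarrow> n \<le> degree C"
  shows "rf.indep_over_constants (wronskian_family n X) {1..2 * n}"
proof (rule rf_indep_over_constants_if_real, intro allI impI)
  fix r assume "(\<Sum>k\<in>{1..2 * n}. rf_const (r k) * wronskian_family n X k) = 0"
  then have rel: "(\<Sum>i = 1..n. rf_const (r i) * (rf_z_pow (n - i) * X))
      + (\<Sum>j<n. rf_const (r (j + Suc n)) * rf_z_pow (n - 1 - j)) = 0"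
    using sum_wronskian_family[of "\<lambda>k v. rf_const (r k) * v" n X] by simp
  define C where "C = (\<Sum>i = 1..n. monom (r i) (n - i))"
  define E where "E = (\<Sum>j<n. monom (r (j + Suc n)) (n - 1 - j))"
  have "rf_of_poly (C * initial_poly Q x + E * Q) = rf_of_poly Q * (rf_of_poly C * X + rf_of_poly E)"
    by (simp add: rf_of_poly_add rf_of_poly_mult QX[symmetric] algebra_simps)
  also have "rf_of_poly C * X + rf_of_poly E = 0"
    using rel by (simp add: C_def E_def rf_of_poly_sum rf_of_poly_monom sum_distrib_right mult.assoc)
  finally have poly_rel: "C * initial_poly Q x + E * Q = 0" by (simp add: rf_of_poly_eq_0_iff)
  have "C = 0"
  proof (rule ccontr)
    assume "C \<noteq> 0"
    moreover have "annihilates C x"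
      using annihilates_of_relation[OF ann Q poly_rel] .
    moreover have "degree C \<le> n - 1"
      unfolding C_def by (auto intro!: degree_sum_le order.trans[OF degree_monom_le])
    ultimately show False using minimal by (cases n) (auto simp: C_def)
  qed
  then have "E = 0" using poly_rel Q by simp
  have low: "\<forall>i\<in>{1..n}. r i = 0"
    using \<open>C = 0\<close>
    by (intro coeffs_eq_0_if_sum_monom_eq_0[of "\<lambda>i. n - i"]) (auto simp: C_def inj_on_def)
  have "inj_on (\<lambda>j. n - 1 - j) {..<n}" by (auto simp: inj_on_def)
  then have high: "\<forall>j<n. r (j + Suc n) = 0"
    using \<open>E = 0\<close> coeffs_eq_0_if_sum_monom_eq_0[of "\<lambda>j. n - 1 - j" "{..<n}" "\<lambda>j. r (j + Suc n)"]
    by (auto simp: E_def)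
  show "\<forall>k\<in>{1..2 * n}. r k = 0"
    using low high unfolding atLeastAtMost_double by auto
qed

text \<open>The unknowns (\<alpha> 1, ..., \<alpha> n, \<beta> 0, ..., \<beta> (n - 1)) as one vector indexed by the columns
  1..2n of M.\<close>
definition block_coeffs :: "nat \<Rightarrow> (nat \<Rightarrow> 'a) \<Rightarrow> (nat \<Rightarrow> 'a) \<Rightarrow> nat \<Rightarrow> 'a" where
  "block_coeffs n \<alpha> \<beta> k = (if k \<le> n then \<alpha> k else \<beta> (k - Suc n))"

lemma sum_block_coeffs_wronskian_family:
  "(\<Sum>k\<in>{1..2 * n}. block_coeffs n \<alpha> \<beta> k * g (wronskian_family n X k))
     = (\<Sum>i = 1..n. \<alpha> i * g (rf_z_pow (n - i) * X)) + (\<Sum>j<n. \<beta> j * g (rf_z_pow (n - 1 - j)))"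
  unfolding sum_wronskian_family[of "\<lambda>k v. block_coeffs n \<alpha> \<beta> k * g v" n X]
  by (auto simp: block_coeffs_def intro!: sum.cong arg_cong2[where f = "(+)"])

lemma block_coeffs_eq_iff:
  "(\<forall>k\<in>{1..2 * n}. block_coeffs n \<alpha> \<beta> k = block_coeffs n \<alpha>' \<beta>' k)
     \<longleftrightarrow> (\<forall>i\<in>{1..n}. \<alpha> i = \<alpha>' i) \<and> (\<forall>j<n. \<beta> j = \<beta>' j)"
  unfolding atLeastAtMost_double by (auto simp: block_coeffs_def ball_Un)

lemma wronskian_family_equation_iff:
  "(rf_deriv ^^ \<chi>) (wronskian_family n X 0)
       = (\<Sum>k\<in>{1..2 * n}. block_coeffs n \<alpha> \<beta> k * (rf_deriv ^^ \<chi>) (wronskian_family n X k))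
   \<longleftrightarrow> rf_deriv_n \<chi> (rf_z_pow n * X)
       = (\<Sum>i = 1..n. \<alpha> i * rf_deriv_n \<chi> (rf_z_pow (n - i) * X))
         + (\<Sum>j<n. \<beta> j * rf_deriv_n \<chi> (rf_z_pow (n - 1 - j)))"
  using sum_block_coeffs_wronskian_family[of n \<alpha> \<beta> "rf_deriv ^^ \<chi>" X]
  by (simp add: wronskian_family_def rf_deriv_n_def)

lemma wronskian_family_relation:
  assumes "rf_of_poly (recurrence_poly n a) * X = rf_of_poly (\<Sum>j<n. monom (b j) (n - 1 - j))"
  shows "wronskian_family n X 0
    = (\<Sum>k\<in>{1..2 * n}.
         block_coeffs n (\<lambda>i. rf_const (a i)) (\<lambda>j. rf_const (b j)) k * wronskian_family n X k)"
proof -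
  have "rf_z_pow n * X - (\<Sum>i = 1..n. rf_const (a i) * (rf_z_pow (n - i) * X))
      = (\<Sum>j<n. rf_const (b j) * rf_z_pow (n - 1 - j))"
    using assms by (simp add: recurrence_poly_def rf_of_poly_diff rf_of_poly_sum rf_of_poly_monom
        left_diff_distrib sum_distrib_right mult.assoc)
  then show ?thesis
    using sum_block_coeffs_wronskian_family[of n "\<lambda>i. rf_const (a i)" "\<lambda>j. rf_const (b j)" "\<lambda>v. v" X]
    by (simp add: wronskian_family_def algebra_simps)
qed

lemma wronskian_family_identifiable:
  assumes "wronskian_family n X 0 = (\<Sum>k\<in>{1..2 * n}. block_coeffs n \<alpha>' \<beta>' k * wronskian_family n X k)"
    and "\<forall>k\<in>{1..2 * n}. rf_deriv (block_coeffs n \<alpha>' \<beta>' k) = 0"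
    and "rf.indep_over_constants (wronskian_family n X) {1..2 * n}"
  shows "(\<forall>\<chi> \<le> 2 * n. rf_deriv_n \<chi> (rf_z_pow n * X)
             = (\<Sum>i = 1..n. \<alpha> i * rf_deriv_n \<chi> (rf_z_pow (n - i) * X))
               + (\<Sum>j<n. \<beta> j * rf_deriv_n \<chi> (rf_z_pow (n - 1 - j))))
         \<longleftrightarrow> (\<forall>i\<in>{1..n}. \<alpha> i = \<alpha>' i) \<and> (\<forall>j<n. \<beta> j = \<beta>' j)"
  using rf.wronskian_identifiable[OF assms, of "block_coeffs n \<alpha> \<beta>"]
  unfolding wronskian_family_equation_iff block_coeffs_eq_iff by simp

theorem theorem1:
  fixes n :: nat and x :: "nat \<Rightarrow> real" and a :: "nat \<Rightarrow> real"
    and X :: "real poly fract" and pX qX :: "real poly"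
  assumes n_pos: "n \<ge> 1"
    and recur: "\<forall>t. x (t + n) = (\<Sum>i = 1..n. a i * x (t + n - i))"
    and minimal: "\<not> (\<exists>m < n. \<exists>c :: nat \<Rightarrow> real. \<forall>t. x (t + m) = (\<Sum>i = 1..m. c i * x (t + m - i)))"
    and X_def: "X = Fract pX qX" and qX_nz: "qX \<noteq> 0"
    and X_expansion: "\<exists>R. \<forall>z :: real. \<bar>z\<bar> > R \<longrightarrow>
                        (\<lambda>t. x t / z ^ (t + 1)) sums (poly pX z / poly qX z)"
  defines "Q \<equiv> monom 1 n - (\<Sum>i = 1..n. monom (a i) (n - i))"
  defines "M \<equiv> mat (2 * n + 1) (2 * n + 1) (\<lambda>(\<chi>, k).
                 if k \<le> n then rf_deriv_n \<chi> (rf_z_pow (n - k) * X)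
                 else rf_deriv_n \<chi> (rf_z_pow (2 * n - k)))"
  shows "\<exists>b :: nat \<Rightarrow> real.
           rf_of_poly Q * X = rf_of_poly (\<Sum>j < n. monom (b j) (n - 1 - j))
         \<and> vec_space.rank (2 * n + 1) M = 2 * n
         \<and> (\<forall>(\<alpha> :: nat \<Rightarrow> real poly fract) (\<beta> :: nat \<Rightarrow> real poly fract).
              (\<forall>\<chi> \<le> 2 * n.
                 rf_deriv_n \<chi> (rf_z_pow n * X)
                 = (\<Sum>i = 1..n. \<alpha> i * rf_deriv_n \<chi> (rf_z_pow (n - i) * X))
                   + (\<Sum>j < n. \<beta> j * rf_deriv_n \<chi> (rf_z_pow (n - 1 - j))))
              \<longleftrightarrow> ((\<forall>i \<in> {1..n}. \<alpha> i = rf_const (a i)) \<and> (\<forall>j < n. \<beta> j = rf_const (b j))))"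
proof -
  have Q: "Q = recurrence_poly n a" by (simp add: Q_def recurrence_poly_def)
  have ann: "annihilates Q x" unfolding Q using recur by (rule annihilates_recurrence_poly)
  have degQ: "degree Q = n" by (simp add: Q degree_recurrence_poly)
  define b where "b j = coeff (initial_poly Q x) (n - 1 - j)" for j
  have P: "initial_poly Q x = (\<Sum>j<n. monom (b j) (n - 1 - j))"
    unfolding b_def using degree_initial_poly[of Q x] n_pos degQ by (intro poly_eq_sum_monom_desc) simp
  have QX: "rf_of_poly Q * X = rf_of_poly (initial_poly Q x)"
    using mult_eq_initial_poly_mult_if_expansion[OF ann qX_nz X_expansion] qX_nz
    by (simp add: X_def rf_of_poly_def eq_fract)
  have indep: "rf.indep_over_constants (wronskian_family n X) {1..2 * n}"
    using degQ n_pos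
    by (intro wronskian_family_indep[OF ann _ QX] allI impI degree_annihilator_ge[OF minimal]) auto
  let ?c = "block_coeffs n (\<lambda>i. rf_const (a i)) (\<lambda>j. rf_const (b j))"
  have rel: "wronskian_family n X 0 = (\<Sum>k\<in>{1..2 * n}. ?c k * wronskian_family n X k)"
    using QX[unfolded P, unfolded Q] by (rule wronskian_family_relation)
  have const: "\<forall>k\<in>{1..2 * n}. rf_deriv (?c k) = 0"
    by (auto simp: block_coeffs_def rf_deriv_eq_0_iff)
  have "M = mat (Suc (2 * n)) (Suc (2 * n)) (\<lambda>(\<chi>, k). (rf_deriv ^^ \<chi>) (wronskian_family n X k))"
    unfolding M_def by (rule eq_matI) (simp_all add: wronskian_family_def rf_deriv_n_def)
  then have "vec_space.rank (2 * n + 1) M = 2 * n"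
    using rf.wronskian_rank[OF rel const indep] by simp
  then show ?thesis
    using QX wronskian_family_identifiable[OF rel const indep] unfolding P
    by (intro exI[of _ b] conjI allI)
qed

end
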